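(* If $C$ is any homogeneous binary perfect code of length $n$ (containing $0^n$), then the Vasil'ev code $V_C^0=\{(x+y,\ |x|,\ x)\mid x\in F^n,\ y\in C\}$ of length $2n+1$ is homogeneous.
   Context: $|x|=x_1+\dots+x_n\pmod 2$. For a binary perfect code $C$ of length $m$ and $y\in C$, $STS(C,y)=\{\mathrm{supp}(x+y)\mid x\in C,\ d(x,y)=3\}$, with $d$ the Hamming distance. A perfect code $C$ containing $0^m$ is homogeneous if for every $y\in C$ there is a permutation $\pi\in S_m$ with $\pi(STS(C,y))=STS(C,0^m)$. *)

theory Defs
  imports "HOL-Combinatorics.Permutations"
begin

definition words :: "nat \<Rightarrow> bool list set" where
  "words m = {x. length x = m}"

definition hdist :: "bool list \<Rightarrow> bool list \<Rightarrow> nat" where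
  "hdist x y = card {i. i < length x \<and> x ! i \<noteq> y ! i}"

definition xorw :: "bool list \<Rightarrow> bool list \<Rightarrow> bool list" where
  "xorw x y = map2 (\<noteq>) x y"

definition supp :: "bool list \<Rightarrow> nat set" where
  "supp x = {i. i < length x \<and> x ! i}"

text \<open>Parity |x| = x_1 + ... + x_n mod 2, as a bit.\<close>
definition parity :: "bool list \<Rightarrow> bool" where
  "parity x = odd (card (supp x))"

definition perfect_code :: "nat \<Rightarrow> bool list set \<Rightarrow> bool" where
  "perfect_code m C \<longleftrightarrow> C \<subseteq> words m \<and>
     (\<forall>x\<in>words m. \<exists>!c. c \<in> C \<and> hdist x c \<le> 1)"

definition STS :: "bool list set \<Rightarrow> bool list \<Rightarrow> nat set set" where
  "STS C y = {supp (xorw x y) | x. x \<in> C \<and> hdist x y = 3}"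

definition homogeneous :: "nat \<Rightarrow> bool list set \<Rightarrow> bool" where
  "homogeneous m C \<longleftrightarrow> perfect_code m C \<and> replicate m False \<in> C \<and>
     (\<forall>y\<in>C. \<exists>\<pi>. \<pi> permutes {..<m} \<and>
        (\<lambda>T. \<pi> ` T) ` STS C y = STS C (replicate m False))"

definition vasilev :: "nat \<Rightarrow> bool list set \<Rightarrow> bool list set" where
  "vasilev n C = {xorw x y @ [parity x] @ x | x y. x \<in> words n \<and> y \<in> C}"

end

theory Submission
  imports Defs
begin

text \<open>
  Identify a word with its support. The Vasil'ev word built from \<open>x\<close> and \<open>y\<close> then has support
  \<open>(X \<triangle> Y) \<union> {n | |X| odd} \<union> (X shifted by n + 1)\<close>, which is additive in \<open>(X, Y)\<close>; this makes
  \<open>V\<close> perfect, and translating \<open>V\<close> by one of its words amounts to translating \<open>C\<close> by \<open>y\<close>.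
  A weight-3 word of the translate, built from \<open>(X, Z)\<close>, has \<open>|Z| \<le> 3\<close>, and \<open>Z\<close> ranges over
  \<open>C + y\<close>, whose words of weight at most 3 are \<open>0\<close> and the triples of \<open>STS(C, y)\<close>. Hence a permutation
  \<open>\<pi>\<close> carrying \<open>STS(C, y)\<close> to \<open>STS(C, 0)\<close>, applied to both blocks of length \<open>n\<close> while fixing
  the middle coordinate, carries \<open>STS(V, v)\<close> to \<open>STS(V, 0)\<close>.
\<close>


lemma card_sym_diff: "finite A \<Longrightarrow> finite B \<Longrightarrow> card (sym_diff A B) = card (A - B) + card (B - A)"
  by (intro card_Un_disjoint) auto

lemma odd_card_sym_diff:
  assumes "finite A" "finite B"
  shows "odd (card (sym_diff A B)) \<longleftrightarrow> odd (card A) \<noteq> odd (card B)"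
proof -
  have "card A = card (A \<inter> B) + card (A - B)" "card B = card (A \<inter> B) + card (B - A)"
    using card_Int_Diff[OF assms(1), of B] card_Int_Diff[OF assms(2), of A] by (simp_all add: Int_commute)
  then show ?thesis using card_sym_diff[OF assms] by presburger
qed

lemma card_sym_diff_triangle:
  assumes "finite A" "finite B" "finite C"
  shows "card (sym_diff A C) \<le> card (sym_diff A B) + card (sym_diff B C)"
proof -
  have "card (sym_diff A C) \<le> card (sym_diff A B \<union> sym_diff B C)"
    by (rule card_mono) (use assms in auto)
  also have "\<dots> \<le> card (sym_diff A B) + card (sym_diff B C)" by (rule card_Un_le)
  finally show ?thesis .
qed

lemma finite_subset_lessThan: "A \<subseteq> {..<n::nat} \<Longrightarrow> finite A"
  by (rule finite_subset[OF _ finite_lessThan])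

section \<open>Words as sets of coordinates\<close>

lemma supp_subset_lessThan: "supp x \<subseteq> {..<length x}"
  by (auto simp: supp_def)

lemma supp_replicate_False [simp]: "supp (replicate m False) = {}"
  by (auto simp: supp_def)

lemma supp_xorw: "length x = length y \<Longrightarrow> supp (xorw x y) = sym_diff (supp x) (supp y)"
  by (auto simp: supp_def xorw_def)

lemma length_xorw [simp]: "length (xorw x y) = min (length x) (length y)"
  by (simp add: xorw_def)

lemma hdist_eq_card_sym_diff:
  "length x = length y \<Longrightarrow> hdist x y = card (sym_diff (supp x) (supp y))"
  unfolding hdist_def by (rule arg_cong[where f = card]) (auto simp: supp_def)

lemma bij_betw_supp_words: "bij_betw supp (words m) (Pow {..<m})"
proof (rule bij_betw_byWitness[where f' = "\<lambda>S. map (\<lambda>i. i \<in> S) [0..<m]"])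
  show "\<forall>x\<in>words m. map (\<lambda>i. i \<in> supp x) [0..<m] = x"
    by (auto simp: words_def supp_def intro!: nth_equalityI)
  show "\<forall>S\<in>Pow {..<m}. supp (map (\<lambda>i. i \<in> S) [0..<m]) = S"
    by (auto simp: supp_def)
  show "supp ` words m \<subseteq> Pow {..<m}"
    using supp_subset_lessThan by (auto simp: words_def)
  show "(\<lambda>S. map (\<lambda>i. i \<in> S) [0..<m]) ` Pow {..<m} \<subseteq> words m"
    by (auto simp: words_def)
qed

definition join :: "nat \<Rightarrow> nat set \<Rightarrow> bool \<Rightarrow> nat set \<Rightarrow> nat set" where
  "join n a b c = a \<union> (if b then {n} else {}) \<union> (\<lambda>j. j + Suc n) ` c"

lemma mem_join_iff:
  "i \<in> join n a b c \<longleftrightarrow> i \<in> a \<or> (i = n \<and> b) \<or> (Suc n \<le> i \<and> i - Suc n \<in> c)"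
proof -
  have "i \<in> (\<lambda>j. j + Suc n) ` c \<longleftrightarrow> Suc n \<le> i \<and> i - Suc n \<in> c"
  proof
    assume "Suc n \<le> i \<and> i - Suc n \<in> c"
    then show "i \<in> (\<lambda>j. j + Suc n) ` c" by (intro image_eqI[of _ _ "i - Suc n"]) auto
  qed auto
  then show ?thesis by (auto simp: join_def)
qed

lemma supp_append_Cons: "supp (a @ b # c) = join (length a) (supp a) b (supp c)"
proof (rule set_eqI)
  fix i
  show "i \<in> supp (a @ b # c) \<longleftrightarrow> i \<in> join (length a) (supp a) b (supp c)"
    by (cases "i < length a"; cases "i = length a")
       (auto simp: mem_join_iff supp_def nth_append nth_Cons' Suc_diff_Suc)
qed

lemma card_join:
  assumes "a \<subseteq> {..<n}" "finite c"
  shows "card (join n a b c) = card a + of_bool b + card c"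
proof -
  have "finite a" using assms(1) by (rule finite_subset_lessThan)
  have "card (join n a b c) = card (a \<union> (if b then {n} else {})) + card ((\<lambda>j. j + Suc n) ` c)"
    unfolding join_def by (rule card_Un_disjoint) (use assms \<open>finite a\<close> in auto)
  also have "card (a \<union> (if b then {n} else {})) = card a + of_bool b"
    using assms(1) \<open>finite a\<close> by (cases b) (auto simp: subset_iff card_insert_if)
  also have "card ((\<lambda>j. j + Suc n) ` c) = card c"
    by (rule card_image) (simp add: inj_on_def)
  finally show ?thesis .
qed

lemma join_sym_diff:
  assumes "a \<subseteq> {..<n}" "a' \<subseteq> {..<n}"
  shows "sym_diff (join n a b c) (join n a' b' c') = join n (sym_diff a a') (b \<noteq> b') (sym_diff c c')"
proof (rule set_eqI)
  fix i
  show "i \<in> sym_diff (join n a b c) (join n a' b' c') \<longleftrightarrow> i \<in> join n (sym_diff a a') (b \<noteq> b') (sym_diff c c')"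
    using assms by (cases "i < n") (auto simp: mem_join_iff)
qed

lemma join_decompose:
  assumes "S \<subseteq> {..<2 * n + 1}"
  shows "S = join n (S \<inter> {..<n}) (n \<in> S) {j. j + Suc n \<in> S}"
proof (rule set_eqI)
  fix i
  show "i \<in> S \<longleftrightarrow> i \<in> join n (S \<inter> {..<n}) (n \<in> S) {j. j + Suc n \<in> S}"
  proof (cases "n < i")
    case True
    then have "i = (i - Suc n) + Suc n" by simp
    then show ?thesis using True by (auto simp: mem_join_iff)
  next
    case False
    then show ?thesis by (cases "i = n") (auto simp: mem_join_iff)
  qed
qed

section \<open>Perfect codes as set families\<close>

definition covering_radius_le1 :: "nat \<Rightarrow> nat set set \<Rightarrow> bool" where
  "covering_radius_le1 m F \<longleftrightarrow> (\<forall>S\<subseteq>{..<m}. \<exists>A\<in>F. card (sym_diff S A) \<le> 1)"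

definition min_distance_ge3 :: "nat set set \<Rightarrow> bool" where
  "min_distance_ge3 F \<longleftrightarrow> (\<forall>A\<in>F. \<forall>B\<in>F. A \<noteq> B \<longrightarrow> 3 \<le> card (sym_diff A B))"

lemma common_neighbour:
  fixes m :: nat
  assumes "A \<subseteq> {..<m}" "B \<subseteq> {..<m}" "card (sym_diff A B) \<le> 2"
  obtains S where "S \<subseteq> {..<m}" "card (sym_diff S A) \<le> 1" "card (sym_diff S B) \<le> 1"
proof (cases "A = B")
  case True
  then show ?thesis using that[of A] assms by simp
next
  case False
  then obtain i where i: "i \<in> sym_diff A B" by blast
  let ?S = "sym_diff A {i}"
  have "sym_diff ?S A = {i}" by auto
  moreover have "sym_diff ?S B = sym_diff A B - {i}" using i by auto
  moreover have "finite (sym_diff A B)" using assms by (intro finite_subset_lessThan) auto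
  ultimately have "card (sym_diff ?S A) \<le> 1" "card (sym_diff ?S B) \<le> 1"
    using i assms(3) by auto
  moreover have "?S \<subseteq> {..<m}" using i assms by auto
  ultimately show ?thesis using that by blast
qed

lemma unique_neighbour_iff:
  assumes F: "F \<subseteq> Pow {..<m}"
  shows "(\<forall>S\<subseteq>{..<m}. \<exists>!A. A \<in> F \<and> card (sym_diff S A) \<le> 1) \<longleftrightarrow>
    covering_radius_le1 m F \<and> min_distance_ge3 F"
proof
  assume unique: "\<forall>S\<subseteq>{..<m}. \<exists>!A. A \<in> F \<and> card (sym_diff S A) \<le> 1"
  have "3 \<le> card (sym_diff A B)" if "A \<in> F" "B \<in> F" "A \<noteq> B" for A B
  proof (rule ccontr)
    assume "\<not> 3 \<le> card (sym_diff A B)"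
    then have "card (sym_diff A B) \<le> 2" by simp
    moreover have "A \<subseteq> {..<m}" "B \<subseteq> {..<m}" using that F by auto
    ultimately obtain S where "S \<subseteq> {..<m}" "card (sym_diff S A) \<le> 1" "card (sym_diff S B) \<le> 1"
      using common_neighbour by blast
    then show False using unique that by blast
  qed
  moreover have "\<exists>A\<in>F. card (sym_diff S A) \<le> 1" if "S \<subseteq> {..<m}" for S
    using unique that by (meson ex1_implies_ex)
  ultimately show "covering_radius_le1 m F \<and> min_distance_ge3 F"
    unfolding covering_radius_le1_def min_distance_ge3_def by blast
next
  assume "covering_radius_le1 m F \<and> min_distance_ge3 F"
  then have cover: "covering_radius_le1 m F" and dist: "min_distance_ge3 F" by auto
  show "\<forall>S\<subseteq>{..<m}. \<exists>!A. A \<in> F \<and> card (sym_diff S A) \<le> 1"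
  proof (intro allI impI)
    fix S assume S: "S \<subseteq> {..<m}"
    have "A = B" if "A \<in> F" "B \<in> F" "card (sym_diff S A) \<le> 1" "card (sym_diff S B) \<le> 1" for A B
    proof -
      have "finite A" "finite S" "finite B" using that S F finite_subset_lessThan by blast+
      then have "card (sym_diff A B) \<le> card (sym_diff A S) + card (sym_diff S B)"
        by (rule card_sym_diff_triangle)
      also have "\<dots> \<le> 2" using that by (simp add: Un_commute)
      finally have "card (sym_diff A B) < 3" by simp
      then show "A = B" using dist that unfolding min_distance_ge3_def by (meson not_le)
    qed
    moreover obtain A where "A \<in> F" "card (sym_diff S A) \<le> 1"
      using cover S unfolding covering_radius_le1_def by blast
    ultimately show "\<exists>!A. A \<in> F \<and> card (sym_diff S A) \<le> 1" by (intro ex1I[of _ A]) auto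
  qed
qed

lemma ex1_image_iff:
  assumes "inj_on f C"
  shows "(\<exists>!c. c \<in> C \<and> P (f c)) \<longleftrightarrow> (\<exists>!A. A \<in> f ` C \<and> P A)"
proof
  assume "\<exists>!c. c \<in> C \<and> P (f c)"
  then obtain c where c: "c \<in> C" "P (f c)" and unique: "\<And>c'. c' \<in> C \<Longrightarrow> P (f c') \<Longrightarrow> c' = c"
    by blast
  show "\<exists>!A. A \<in> f ` C \<and> P A"
    by (rule ex1I[of _ "f c"]) (use c unique in blast)+
next
  assume "\<exists>!A. A \<in> f ` C \<and> P A"
  then obtain c where c: "c \<in> C" "P (f c)" and unique: "\<And>A. A \<in> f ` C \<Longrightarrow> P A \<Longrightarrow> A = f c"
    by blast
  show "\<exists>!c. c \<in> C \<and> P (f c)"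
    by (rule ex1I[of _ c]) (use c unique inj_onD[OF assms] in blast)+
qed

lemma perfect_code_iff_unique_supp:
  assumes "C \<subseteq> words m"
  shows "perfect_code m C \<longleftrightarrow>
    (\<forall>S\<subseteq>{..<m}. \<exists>!A. A \<in> supp ` C \<and> card (sym_diff S A) \<le> 1)"
proof -
  have inj: "inj_on supp C"
    using bij_betw_imp_inj_on[OF bij_betw_supp_words] assms by (rule inj_on_subset)
  have "(\<exists>!c. c \<in> C \<and> hdist x c \<le> 1) \<longleftrightarrow> (\<exists>!A. A \<in> supp ` C \<and> card (sym_diff (supp x) A) \<le> 1)"
    if "x \<in> words m" for x
  proof -
    have "hdist x c = card (sym_diff (supp x) (supp c))" if "c \<in> C" for c
      using \<open>x \<in> words m\<close> that assms by (intro hdist_eq_card_sym_diff) (auto simp: words_def)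
    then have "(\<exists>!c. c \<in> C \<and> hdist x c \<le> 1) \<longleftrightarrow> (\<exists>!c. c \<in> C \<and> card (sym_diff (supp x) (supp c)) \<le> 1)"
      by (simp cong: conj_cong)
    also have "\<dots> \<longleftrightarrow> (\<exists>!A. A \<in> supp ` C \<and> card (sym_diff (supp x) A) \<le> 1)"
      by (rule ex1_image_iff[OF inj])
    finally show ?thesis .
  qed
  then have "perfect_code m C \<longleftrightarrow>
      (\<forall>x\<in>words m. \<exists>!A. A \<in> supp ` C \<and> card (sym_diff (supp x) A) \<le> 1)"
    using assms by (simp add: perfect_code_def)
  also have "\<dots> \<longleftrightarrow> (\<forall>S\<in>supp ` words m. \<exists>!A. A \<in> supp ` C \<and> card (sym_diff S A) \<le> 1)"
    by simp
  finally show ?thesis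
    unfolding bij_betw_imp_surj_on[OF bij_betw_supp_words] Ball_def Pow_iff .
qed

lemma supp_image_subset_Pow: "C \<subseteq> words m \<Longrightarrow> supp ` C \<subseteq> Pow {..<m}"
  using supp_subset_lessThan by (fastforce simp: words_def)

lemma perfect_code_iff_supp:
  assumes "C \<subseteq> words m"
  shows "perfect_code m C \<longleftrightarrow> covering_radius_le1 m (supp ` C) \<and> min_distance_ge3 (supp ` C)"
  unfolding perfect_code_iff_unique_supp[OF assms]
  by (rule unique_neighbour_iff[OF supp_image_subset_Pow[OF assms]])

section \<open>The Vasil'ev construction\<close>

definition vasilev_set :: "nat \<Rightarrow> nat set \<Rightarrow> nat set \<Rightarrow> nat set" where
  "vasilev_set n X Y = join n (sym_diff X Y) (odd (card X)) X"

definition vasilev_family :: "nat \<Rightarrow> nat set set \<Rightarrow> nat set set" where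
  "vasilev_family n F = {vasilev_set n X Y | X Y. X \<subseteq> {..<n} \<and> Y \<in> F}"

lemma supp_vasilev_word:
  assumes "length x = n" "length y = n"
  shows "supp (xorw x y @ [parity x] @ x) = vasilev_set n (supp x) (supp y)"
  using supp_append_Cons[of "xorw x y" "parity x" x] assms
  by (simp add: vasilev_set_def supp_xorw parity_def)

lemma vasilev_set_sym_diff:
  assumes "X \<subseteq> {..<n}" "Y \<subseteq> {..<n}" "X' \<subseteq> {..<n}" "Y' \<subseteq> {..<n}"
  shows "sym_diff (vasilev_set n X Y) (vasilev_set n X' Y') = vasilev_set n (sym_diff X X') (sym_diff Y Y')"
proof -
  have "(odd (card X) \<noteq> odd (card X')) = odd (card (sym_diff X X'))"
    using odd_card_sym_diff[OF finite_subset_lessThan[OF assms(1)] finite_subset_lessThan[OF assms(3)]]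
    by simp
  moreover have "sym_diff (sym_diff X Y) (sym_diff X' Y') = sym_diff (sym_diff X X') (sym_diff Y Y')"
    by auto
  moreover have "sym_diff X Y \<subseteq> {..<n}" "sym_diff X' Y' \<subseteq> {..<n}" using assms by auto
  ultimately show ?thesis unfolding vasilev_set_def by (simp add: join_sym_diff)
qed

lemma card_vasilev_set:
  assumes "X \<subseteq> {..<n}" "Y \<subseteq> {..<n}"
  shows "card (vasilev_set n X Y) = card (sym_diff X Y) + of_bool (odd (card X)) + card X"
  unfolding vasilev_set_def using assms finite_subset_lessThan by (intro card_join) auto

lemma card_le_card_vasilev_set:
  assumes "X \<subseteq> {..<n}" "Y \<subseteq> {..<n}"
  shows "card Y \<le> card (vasilev_set n X Y)"
proof -
  have "card (sym_diff Y {}) \<le> card (sym_diff Y X) + card (sym_diff X {})"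
    using assms finite_subset_lessThan by (intro card_sym_diff_triangle) auto
  then show ?thesis using card_vasilev_set[OF assms] by (simp add: Un_commute)
qed

lemma supp_image_vasilev:
  assumes "C \<subseteq> words n"
  shows "supp ` vasilev n C = vasilev_family n (supp ` C)"
proof (rule set_eqI)
  fix T
  have supp_word: "supp (xorw x y @ [parity x] @ x) = vasilev_set n (supp x) (supp y)"
    if "x \<in> words n" "y \<in> C" for x y
    using that assms by (intro supp_vasilev_word) (auto simp: words_def)
  show "T \<in> supp ` vasilev n C \<longleftrightarrow> T \<in> vasilev_family n (supp ` C)"
  proof
    assume "T \<in> supp ` vasilev n C"
    then obtain x y where xy: "x \<in> words n" "y \<in> C" "T = supp (xorw x y @ [parity x] @ x)"
      unfolding vasilev_def by blast
    moreover have "supp x \<subseteq> {..<n}"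
      using xy(1) supp_subset_lessThan by (auto simp: words_def)
    ultimately show "T \<in> vasilev_family n (supp ` C)"
      using supp_word unfolding vasilev_family_def by blast
  next
    assume "T \<in> vasilev_family n (supp ` C)"
    then obtain X y where Xy: "X \<subseteq> {..<n}" "y \<in> C" "T = vasilev_set n X (supp y)"
      unfolding vasilev_family_def by blast
    moreover obtain x where "x \<in> words n" "X = supp x"
      using Xy(1) bij_betw_imp_surj_on[OF bij_betw_supp_words, of n] by blast
    ultimately show "T \<in> supp ` vasilev n C"
      using supp_word unfolding vasilev_def by blast
  qed
qed

lemma vasilev_subset_words: "C \<subseteq> words n \<Longrightarrow> vasilev n C \<subseteq> words (2 * n + 1)"
  by (auto simp: vasilev_def words_def)

lemma vasilev_zero_word:
  "xorw (replicate n False) (replicate n False) @ [parity (replicate n False)] @ replicate n False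
    = replicate (2 * n + 1) False"
proof -
  have "xorw (replicate n False) (replicate n False) @ [parity (replicate n False)] @ replicate n False
      = replicate n False @ replicate (Suc n) False"
    by (simp add: xorw_def parity_def zip_replicate)
  also have "\<dots> = replicate (n + Suc n) False"
    by (rule replicate_add[symmetric])
  finally show ?thesis by simp
qed

lemma replicate_in_vasilev:
  assumes "replicate n False \<in> C"
  shows "replicate (2 * n + 1) False \<in> vasilev n C"
  unfolding vasilev_def vasilev_zero_word[symmetric]
  by (intro CollectI exI[of _ "replicate n False"] conjI refl assms) (simp add: words_def)

lemma min_distance_ge3_vasilev_family:
  assumes F: "F \<subseteq> Pow {..<n}" and dist: "min_distance_ge3 F"
  shows "min_distance_ge3 (vasilev_family n F)"
  unfolding min_distance_ge3_def
proof (intro ballI impI)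
  fix A B assume "A \<in> vasilev_family n F" "B \<in> vasilev_family n F" "A \<noteq> B"
  then obtain X Y X' Y' where XY: "X \<subseteq> {..<n}" "Y \<in> F" "A = vasilev_set n X Y"
    and XY': "X' \<subseteq> {..<n}" "Y' \<in> F" "B = vasilev_set n X' Y'"
    unfolding vasilev_family_def by blast
  have "Y \<subseteq> {..<n}" "Y' \<subseteq> {..<n}" using XY XY' F by auto
  let ?P = "sym_diff X X'" and ?Q = "sym_diff Y Y'"
  have PQ: "?P \<subseteq> {..<n}" "?Q \<subseteq> {..<n}" using XY XY' \<open>Y \<subseteq> {..<n}\<close> \<open>Y' \<subseteq> {..<n}\<close> by auto
  have AB: "sym_diff A B = vasilev_set n ?P ?Q"
    unfolding XY(3) XY'(3) using XY XY' \<open>Y \<subseteq> {..<n}\<close> \<open>Y' \<subseteq> {..<n}\<close>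
    by (intro vasilev_set_sym_diff)
  show "3 \<le> card (sym_diff A B)"
  proof (cases "Y = Y'")
    case True
    then have "X \<noteq> X'" using \<open>A \<noteq> B\<close> XY XY' by auto
    then have "card ?P \<noteq> 0" using finite_subset_lessThan[OF PQ(1)] by auto
    then show ?thesis using AB card_vasilev_set[OF PQ] True by (cases "card ?P = 1") auto
  next
    case False
    then have "3 \<le> card ?Q" using dist XY XY' unfolding min_distance_ge3_def by blast
    then show ?thesis unfolding AB using card_le_card_vasilev_set[OF PQ] by linarith
  qed
qed

lemma card_sym_diff_join_vasilev_set:
  assumes "a \<subseteq> {..<n}" "c \<subseteq> {..<n}" "X \<subseteq> {..<n}" "Y \<subseteq> {..<n}"
  shows "card (sym_diff (join n a b c) (vasilev_set n X Y)) =
    card (sym_diff a (sym_diff X Y)) + of_bool (b \<noteq> odd (card X)) + card (sym_diff c X)"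
proof -
  have "sym_diff (join n a b c) (vasilev_set n X Y) =
      join n (sym_diff a (sym_diff X Y)) (b \<noteq> odd (card X)) (sym_diff c X)"
    unfolding vasilev_set_def using assms by (intro join_sym_diff) auto
  moreover have "sym_diff a (sym_diff X Y) \<subseteq> {..<n}" "finite (sym_diff c X)"
    using assms finite_subset_lessThan by auto
  ultimately show ?thesis by (simp add: card_join)
qed

text \<open>Take \<open>X = c\<close>; if the parity bit is then wrong and \<open>a \<triangle> c \<triangle> Y = {i}\<close>, flipping \<open>i\<close> in \<open>X\<close>
  repairs the parity bit and the first block at the cost of one position in the last block.\<close>

lemma vasilev_set_close_to_join:
  assumes ac: "a \<subseteq> {..<n}" "c \<subseteq> {..<n}" and Y: "Y \<subseteq> {..<n}"
    and close: "card (sym_diff (sym_diff a c) Y) \<le> 1"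
  obtains X where "X \<subseteq> {..<n}" "card (sym_diff (join n a b c) (vasilev_set n X Y)) \<le> 1"
proof (cases "b = odd (card c) \<or> sym_diff (sym_diff a c) Y = {}")
  case True
  then have "card (sym_diff (sym_diff a c) Y) + of_bool (b \<noteq> odd (card c)) \<le> 1"
  proof
    assume "sym_diff (sym_diff a c) Y = {}"
    then have "card (sym_diff (sym_diff a c) Y) = 0" by (metis card.empty)
    then show ?thesis by simp
  qed (use close in simp)
  moreover have "sym_diff a (sym_diff c Y) = sym_diff (sym_diff a c) Y" by auto
  ultimately show ?thesis
    using that[of c] card_sym_diff_join_vasilev_set[OF ac ac(2) Y, of b] ac(2) by simp
next
  case False
  then have b: "b \<noteq> odd (card c)" and "sym_diff (sym_diff a c) Y \<noteq> {}" by blast+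
  moreover have "finite (sym_diff (sym_diff a c) Y)"
    using ac Y finite_subset_lessThan by auto
  ultimately have "card (sym_diff (sym_diff a c) Y) \<noteq> 0" by (metis card_0_eq)
  then have "card (sym_diff (sym_diff a c) Y) = 1" using close by linarith
  then obtain i where i: "sym_diff (sym_diff a c) Y = {i}" by (rule card_1_singletonE)
  then have "i < n" using ac Y by auto
  let ?X = "sym_diff c {i}"
  have X: "?X \<subseteq> {..<n}" using ac \<open>i < n\<close> by auto
  have "odd (card ?X) \<longleftrightarrow> \<not> odd (card c)"
    using odd_card_sym_diff[OF finite_subset_lessThan[OF ac(2)], of "{i}"] by simp
  then have parity: "(b \<noteq> odd (card ?X)) = False" using b by blast
  have last_block: "sym_diff c ?X = {i}" by auto
  have "sym_diff a (sym_diff ?X Y) = sym_diff (sym_diff (sym_diff a c) Y) {i}" by auto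
  also have "\<dots> = {}" unfolding i by simp
  finally have first_block: "sym_diff a (sym_diff ?X Y) = {}" .
  have "card (sym_diff (join n a b c) (vasilev_set n ?X Y)) = 1"
    unfolding card_sym_diff_join_vasilev_set[OF ac X Y] parity last_block first_block by simp
  then show ?thesis using that[OF X] by simp
qed

lemma covering_radius_le1_vasilev_family:
  assumes F: "F \<subseteq> Pow {..<n}" and cover: "covering_radius_le1 n F"
  shows "covering_radius_le1 (2 * n + 1) (vasilev_family n F)"
  unfolding covering_radius_le1_def
proof (intro allI impI)
  fix S assume S: "S \<subseteq> {..<2 * n + 1}"
  define a b c where "a = S \<inter> {..<n}" and "b = (n \<in> S)" and "c = {j. j + Suc n \<in> S}"
  have ac: "a \<subseteq> {..<n}" "c \<subseteq> {..<n}" using S by (auto simp: a_def c_def)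
  then have "sym_diff a c \<subseteq> {..<n}" by auto
  then obtain Y where Y: "Y \<in> F" "card (sym_diff (sym_diff a c) Y) \<le> 1"
    using cover unfolding covering_radius_le1_def by blast
  then have "Y \<subseteq> {..<n}" using F by auto
  then obtain X where X: "X \<subseteq> {..<n}" "card (sym_diff (join n a b c) (vasilev_set n X Y)) \<le> 1"
    using vasilev_set_close_to_join[OF ac _ Y(2)] by blast
  moreover have "S = join n a b c"
    unfolding a_def b_def c_def using S by (rule join_decompose)
  moreover have "vasilev_set n X Y \<in> vasilev_family n F"
    using X(1) Y(1) unfolding vasilev_family_def by blast
  ultimately show "\<exists>A\<in>vasilev_family n F. card (sym_diff S A) \<le> 1" by auto
qed

lemma perfect_code_vasilev:
  assumes "perfect_code n C"
  shows "perfect_code (2 * n + 1) (vasilev n C)"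
proof -
  have C: "C \<subseteq> words n" using assms by (simp add: perfect_code_def)
  then have "covering_radius_le1 n (supp ` C)" "min_distance_ge3 (supp ` C)"
    using assms perfect_code_iff_supp by blast+
  then show ?thesis
    using supp_image_subset_Pow[OF C] perfect_code_iff_supp[OF vasilev_subset_words[OF C]]
      covering_radius_le1_vasilev_family min_distance_ge3_vasilev_family
    by (simp add: supp_image_vasilev[OF C])
qed

section \<open>Steiner triple systems\<close>

definition sts :: "nat set set \<Rightarrow> nat set \<Rightarrow> nat set set" where
  "sts F B = {sym_diff A B | A. A \<in> F \<and> card (sym_diff A B) = 3}"

lemma STS_eq_sts:
  assumes "C \<subseteq> words m" "y \<in> words m"
  shows "STS C y = sts (supp ` C) (supp y)"
proof -
  have xorw: "supp (xorw x y) = sym_diff (supp x) (supp y)"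
    and hdist: "hdist x y = card (sym_diff (supp x) (supp y))" if "x \<in> C" for x
    using that assms by (auto simp: words_def intro!: supp_xorw hdist_eq_card_sym_diff)
  show ?thesis
  proof (rule set_eqI, rule iffI)
    fix T assume "T \<in> STS C y"
    then obtain x where x: "x \<in> C" "T = supp (xorw x y)" "hdist x y = 3"
      unfolding STS_def by blast
    show "T \<in> sts (supp ` C) (supp y)"
      unfolding sts_def by (intro CollectI exI[of _ "supp x"]) (use x xorw hdist in auto)
  next
    fix T assume "T \<in> sts (supp ` C) (supp y)"
    then obtain x where x: "x \<in> C" "T = sym_diff (supp x) (supp y)" "card T = 3"
      unfolding sts_def by blast
    show "T \<in> STS C y"
      unfolding STS_def by (intro CollectI exI[of _ x]) (use x xorw hdist in auto)
  qed
qed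

lemma STS_vasilev:
  assumes "C \<subseteq> words n" "x \<in> words n" "y \<in> C"
  shows "STS (vasilev n C) (xorw x y @ [parity x] @ x)
    = sts (vasilev_family n (supp ` C)) (vasilev_set n (supp x) (supp y))"
proof -
  have "length x = n" "length y = n" using assms by (auto simp: words_def)
  have "xorw x y @ [parity x] @ x \<in> words (2 * n + 1)"
    using assms vasilev_subset_words unfolding vasilev_def by blast
  then have "STS (vasilev n C) (xorw x y @ [parity x] @ x)
      = sts (supp ` vasilev n C) (supp (xorw x y @ [parity x] @ x))"
    by (rule STS_eq_sts[OF vasilev_subset_words[OF assms(1)]])
  then show ?thesis
    unfolding supp_image_vasilev[OF assms(1)]
      supp_vasilev_word[OF \<open>length x = n\<close> \<open>length y = n\<close>] .
qed

definition vasilev_triples :: "nat \<Rightarrow> nat set set \<Rightarrow> nat set set" where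
  "vasilev_triples n D =
    {vasilev_set n X Z | X Z. X \<subseteq> {..<n} \<and> Z \<in> D \<and> card (vasilev_set n X Z) = 3}"

lemma sts_vasilev_family:
  assumes F: "F \<subseteq> Pow {..<n}" and "X0 \<subseteq> {..<n}" "Y0 \<subseteq> {..<n}"
  shows "sts (vasilev_family n F) (vasilev_set n X0 Y0) = vasilev_triples n ((\<lambda>Y. sym_diff Y Y0) ` F)"
proof (rule set_eqI)
  fix T
  have translate: "sym_diff (vasilev_set n X Y) (vasilev_set n X0 Y0) = vasilev_set n (sym_diff X X0) (sym_diff Y Y0)"
    if "X \<subseteq> {..<n}" "Y \<in> F" for X Y
    using that assms by (intro vasilev_set_sym_diff) auto
  show "T \<in> sts (vasilev_family n F) (vasilev_set n X0 Y0) \<longleftrightarrow> T \<in> vasilev_triples n ((\<lambda>Y. sym_diff Y Y0) ` F)"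
  proof
    assume "T \<in> sts (vasilev_family n F) (vasilev_set n X0 Y0)"
    then obtain A where A: "A \<in> vasilev_family n F"
      and T: "T = sym_diff A (vasilev_set n X0 Y0)" "card T = 3"
      unfolding sts_def by blast
    then obtain X Y where XY: "X \<subseteq> {..<n}" "Y \<in> F" "A = vasilev_set n X Y"
      unfolding vasilev_family_def by blast
    have "sym_diff X X0 \<subseteq> {..<n}" using XY(1) assms(2) by auto
    moreover have "T = vasilev_set n (sym_diff X X0) (sym_diff Y Y0)"
      unfolding T(1) XY(3) translate[OF XY(1,2)] ..
    ultimately show "T \<in> vasilev_triples n ((\<lambda>Y. sym_diff Y Y0) ` F)"
      unfolding vasilev_triples_def using XY(2) T(2) by blast
  next
    assume "T \<in> vasilev_triples n ((\<lambda>Y. sym_diff Y Y0) ` F)"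
    then obtain X Y where XY: "X \<subseteq> {..<n}" "Y \<in> F"
      and T: "T = vasilev_set n X (sym_diff Y Y0)" "card T = 3"
      unfolding vasilev_triples_def by blast
    let ?X = "sym_diff X X0"
    have "?X \<subseteq> {..<n}" using XY(1) assms(2) by auto
    moreover have "sym_diff ?X X0 = X" by auto
    ultimately have "sym_diff (vasilev_set n ?X Y) (vasilev_set n X0 Y0) = T"
      unfolding translate[OF \<open>?X \<subseteq> {..<n}\<close> XY(2)] T(1) by (simp only:)
    moreover have "vasilev_set n ?X Y \<in> vasilev_family n F"
      using \<open>?X \<subseteq> {..<n}\<close> XY unfolding vasilev_family_def by blast
    ultimately show "T \<in> sts (vasilev_family n F) (vasilev_set n X0 Y0)"
      unfolding sts_def using T(2) by blast
  qed
qed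

lemma vasilev_triples_small:
  assumes "D \<subseteq> Pow {..<n}"
  shows "vasilev_triples n D = vasilev_triples n {Z \<in> D. card Z \<le> 3}"
proof
  show "vasilev_triples n D \<subseteq> vasilev_triples n {Z \<in> D. card Z \<le> 3}"
  proof
    fix T assume "T \<in> vasilev_triples n D"
    then obtain X Z where XZ: "X \<subseteq> {..<n}" "Z \<in> D" "T = vasilev_set n X Z" "card T = 3"
      unfolding vasilev_triples_def by blast
    then have "card Z \<le> 3" using assms card_le_card_vasilev_set[of X n Z] by auto
    then show "T \<in> vasilev_triples n {Z \<in> D. card Z \<le> 3}"
      using XZ unfolding vasilev_triples_def by blast
  qed
qed (auto simp: vasilev_triples_def)

lemma small_translates:
  assumes dist: "min_distance_ge3 F" and "Y0 \<in> F"
  shows "{Z \<in> (\<lambda>Y. sym_diff Y Y0) ` F. card Z \<le> 3} = insert {} (sts F Y0)"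
proof (rule set_eqI, rule iffI)
  fix Z assume "Z \<in> {Z \<in> (\<lambda>Y. sym_diff Y Y0) ` F. card Z \<le> 3}"
  then obtain Y where Y: "Y \<in> F" "Z = sym_diff Y Y0" "card Z \<le> 3" by blast
  show "Z \<in> insert {} (sts F Y0)"
  proof (cases "Y = Y0")
    case True
    then show ?thesis using Y by simp
  next
    case False
    then have "card Z = 3" using dist Y \<open>Y0 \<in> F\<close> unfolding min_distance_ge3_def by force
    then show ?thesis using Y unfolding sts_def by blast
  qed
next
  fix Z assume "Z \<in> insert {} (sts F Y0)"
  moreover have "{} \<in> (\<lambda>Y. sym_diff Y Y0) ` F"
    using \<open>Y0 \<in> F\<close> by (rule rev_image_eqI) simp
  ultimately show "Z \<in> {Z \<in> (\<lambda>Y. sym_diff Y Y0) ` F. card Z \<le> 3}"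
    unfolding sts_def by auto
qed

definition vasilev_perm :: "nat \<Rightarrow> (nat \<Rightarrow> nat) \<Rightarrow> nat \<Rightarrow> nat" where
  "vasilev_perm n p i =
    (if i < n then p i else if n < i \<and> i \<le> 2 * n then p (i - Suc n) + Suc n else i)"

lemma vasilev_perm_inverse:
  assumes q: "q permutes {..<n}" and pq: "\<And>x. p (q x) = x"
  shows "vasilev_perm n p (vasilev_perm n q i) = i"
proof -
  consider "i < n" | "i = n" | "n < i" "i \<le> 2 * n" | "2 * n < i" by linarith
  then show ?thesis
  proof cases
    case 1
    then have "q i < n" using permutes_in_image[OF q] by simp
    then show ?thesis using 1 pq by (simp add: vasilev_perm_def)
  next
    case 3
    then have "q (i - Suc n) < n" using permutes_in_image[OF q] by simp
    then show ?thesis using 3 pq by (simp add: vasilev_perm_def)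
  qed (simp_all add: vasilev_perm_def)
qed

lemma vasilev_perm_less:
  assumes "r permutes {..<n}" "i < 2 * n + 1"
  shows "vasilev_perm n r i < 2 * n + 1"
proof -
  have r_less: "r j < n" if "j < n" for j using permutes_in_image[OF assms(1)] that by simp
  moreover have "r i < 2 * n + 1" if "i < n" using r_less[OF that] by simp
  moreover have "n < i \<Longrightarrow> i \<le> 2 * n \<Longrightarrow> i - Suc n < n" by linarith
  ultimately show ?thesis using assms(2) by (auto simp: vasilev_perm_def)
qed

lemma vasilev_perm_permutes:
  assumes p: "p permutes {..<n}"
  shows "vasilev_perm n p permutes {..<2 * n + 1}"
proof (rule bij_imp_permutes)
  have q: "inv p permutes {..<n}" by (rule permutes_inv[OF p])
  show "bij_betw (vasilev_perm n p) {..<2 * n + 1} {..<2 * n + 1}"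
  proof (rule bij_betw_byWitness[where f' = "vasilev_perm n (inv p)"])
    show "\<forall>i\<in>{..<2 * n + 1}. vasilev_perm n (inv p) (vasilev_perm n p i) = i"
      using vasilev_perm_inverse[OF p permutes_inverses(2)[OF p]] by blast
    show "\<forall>i\<in>{..<2 * n + 1}. vasilev_perm n p (vasilev_perm n (inv p) i) = i"
      using vasilev_perm_inverse[OF q permutes_inverses(1)[OF p]] by blast
    show "vasilev_perm n p ` {..<2 * n + 1} \<subseteq> {..<2 * n + 1}"
      using vasilev_perm_less[OF p] by auto
    show "vasilev_perm n (inv p) ` {..<2 * n + 1} \<subseteq> {..<2 * n + 1}"
      using vasilev_perm_less[OF q] by auto
  qed
next
  fix x assume "x \<notin> {..<2 * n + 1}"
  then show "vasilev_perm n p x = x" by (simp add: vasilev_perm_def)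
qed

lemma image_vasilev_perm_join:
  assumes "a \<subseteq> {..<n}" "c \<subseteq> {..<n}"
  shows "vasilev_perm n p ` join n a b c = join n (p ` a) b (p ` c)"
proof -
  have "vasilev_perm n p ` a = p ` a"
    using assms(1) by (intro image_cong) (auto simp: vasilev_perm_def)
  moreover have "vasilev_perm n p ` (if b then {n} else {}) = (if b then {n} else {})"
    by (simp add: vasilev_perm_def)
  moreover have "vasilev_perm n p ` (\<lambda>j. j + Suc n) ` c = (\<lambda>j. j + Suc n) ` p ` c"
    unfolding image_image using assms(2) by (intro image_cong) (auto simp: vasilev_perm_def)
  ultimately show ?thesis unfolding join_def image_Un by simp
qed

lemma image_vasilev_perm_vasilev_set:
  assumes p: "p permutes {..<n}" and "X \<subseteq> {..<n}" "Y \<subseteq> {..<n}"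
  shows "vasilev_perm n p ` vasilev_set n X Y = vasilev_set n (p ` X) (p ` Y)"
proof -
  have "p ` sym_diff X Y = sym_diff (p ` X) (p ` Y)"
    using permutes_inj[OF p] by (simp add: image_Un image_set_diff)
  moreover have "card (p ` X) = card X"
    using permutes_inj_on[OF p] by (rule card_image)
  moreover have "sym_diff X Y \<subseteq> {..<n}" using assms by auto
  ultimately show ?thesis
    unfolding vasilev_set_def using image_vasilev_perm_join[OF _ assms(2)] by simp
qed

lemma image_vasilev_triples:
  assumes p: "p permutes {..<n}" and D: "D \<subseteq> Pow {..<n}"
  shows "(`) (vasilev_perm n p) ` vasilev_triples n D = vasilev_triples n ((`) p ` D)"
proof -
  have card_image_perm: "card (vasilev_perm n p ` T) = card T" for T
    using permutes_inj_on[OF vasilev_perm_permutes[OF p]] by (rule card_image)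
  have sub: "p ` X \<subseteq> {..<n}" if "X \<subseteq> {..<n}" for X
    using that permutes_in_image[OF p] by auto
  show ?thesis
  proof (rule set_eqI, rule iffI)
    fix T assume "T \<in> (`) (vasilev_perm n p) ` vasilev_triples n D"
    then obtain X Z where XZ: "X \<subseteq> {..<n}" "Z \<in> D" "card (vasilev_set n X Z) = 3"
      and T: "T = vasilev_perm n p ` vasilev_set n X Z"
      unfolding vasilev_triples_def by blast
    have "T = vasilev_set n (p ` X) (p ` Z)"
      unfolding T using XZ D by (intro image_vasilev_perm_vasilev_set[OF p]) auto
    moreover have "card T = 3" unfolding T card_image_perm by (fact XZ(3))
    ultimately show "T \<in> vasilev_triples n ((`) p ` D)"
      unfolding vasilev_triples_def using sub[OF XZ(1)] imageI[OF XZ(2), of "(`) p"] by blast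
  next
    fix T assume "T \<in> vasilev_triples n ((`) p ` D)"
    then obtain X Z where XZ: "X \<subseteq> {..<n}" "Z \<in> D" "card T = 3"
      and T: "T = vasilev_set n X (p ` Z)"
      unfolding vasilev_triples_def by blast
    let ?X = "inv p ` X"
    have "p ` ?X = X" by (simp add: image_image permutes_inverses(1)[OF p])
    moreover have "?X \<subseteq> {..<n}" using XZ(1) permutes_in_image[OF permutes_inv[OF p]] by auto
    ultimately have T': "T = vasilev_perm n p ` vasilev_set n ?X Z"
      unfolding T using XZ D by (subst image_vasilev_perm_vasilev_set[OF p]) auto
    then have "card (vasilev_set n ?X Z) = 3" using XZ(3) card_image_perm by simp
    then have "vasilev_set n ?X Z \<in> vasilev_triples n D"
      unfolding vasilev_triples_def using XZ(2) \<open>?X \<subseteq> {..<n}\<close> by blast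
    then show "T \<in> (`) (vasilev_perm n p) ` vasilev_triples n D"
      unfolding T' by (rule imageI)
  qed
qed

lemma vasilev_family_sts_image:
  assumes F: "F \<subseteq> Pow {..<n}" "{} \<in> F" "min_distance_ge3 F"
    and X0: "X0 \<subseteq> {..<n}" and Y0: "Y0 \<in> F"
    and p: "p permutes {..<n}" "(`) p ` sts F Y0 = sts F {}"
  shows "(`) (vasilev_perm n p) ` sts (vasilev_family n F) (vasilev_set n X0 Y0)
    = sts (vasilev_family n F) (vasilev_set n {} {})"
proof -
  have translates: "(\<lambda>Y. sym_diff Y Z) ` F \<subseteq> Pow {..<n}" if "Z \<subseteq> {..<n}" for Z
    using F(1) that by auto
  have sts_triples: "sts (vasilev_family n F) (vasilev_set n X Z) = vasilev_triples n (insert {} (sts F Z))"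
    if "X \<subseteq> {..<n}" "Z \<in> F" for X Z
  proof -
    have "Z \<subseteq> {..<n}" using F(1) that(2) by auto
    then have "sts (vasilev_family n F) (vasilev_set n X Z) = vasilev_triples n ((\<lambda>Y. sym_diff Y Z) ` F)"
      using F(1) that(1) by (intro sts_vasilev_family)
    also have "\<dots> = vasilev_triples n (insert {} (sts F Z))"
      unfolding vasilev_triples_small[OF translates[OF \<open>Z \<subseteq> {..<n}\<close>]] small_translates[OF F(3) that(2)] ..
    finally show ?thesis .
  qed
  have "insert {} (sts F Y0) \<subseteq> Pow {..<n}"
    using translates[of Y0] F(1) Y0 unfolding sts_def by auto
  then have "(`) (vasilev_perm n p) ` vasilev_triples n (insert {} (sts F Y0))
      = vasilev_triples n ((`) p ` insert {} (sts F Y0))"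
    by (rule image_vasilev_triples[OF p(1)])
  also have "(`) p ` insert {} (sts F Y0) = insert {} (sts F {})"
    using p(2) by simp
  finally show ?thesis
    using sts_triples[OF X0 Y0] sts_triples[of "{}" "{}"] F(2) by simp
qed

lemma STS_vasilev_image:
  assumes code: "perfect_code n C" and zero: "replicate n False \<in> C"
    and xy: "x \<in> words n" "y \<in> C"
    and p: "p permutes {..<n}" "(`) p ` STS C y = STS C (replicate n False)"
  shows "(`) (vasilev_perm n p) ` STS (vasilev n C) (xorw x y @ [parity x] @ x)
    = STS (vasilev n C) (replicate (2 * n + 1) False)"
proof -
  have C: "C \<subseteq> words n" using code by (simp add: perfect_code_def)
  have F: "supp ` C \<subseteq> Pow {..<n}" "{} \<in> supp ` C" "min_distance_ge3 (supp ` C)"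
    using supp_image_subset_Pow[OF C] imageI[OF zero, of supp] code perfect_code_iff_supp[OF C]
    by auto
  have zero_word: "replicate n False \<in> words n" by (simp add: words_def)
  have "(`) p ` sts (supp ` C) (supp y) = sts (supp ` C) {}"
    using p(2) STS_eq_sts[OF C] xy(2) C zero_word by auto
  moreover have "supp x \<subseteq> {..<n}" using supp_subset_lessThan[of x] xy(1) by (simp add: words_def)
  ultimately have "(`) (vasilev_perm n p) ` sts (vasilev_family n (supp ` C)) (vasilev_set n (supp x) (supp y))
      = sts (vasilev_family n (supp ` C)) (vasilev_set n {} {})"
    by (intro vasilev_family_sts_image[OF F _ imageI[OF xy(2)] p(1)])
  then show ?thesis
    unfolding STS_vasilev[OF C xy]
      STS_vasilev[OF C zero_word zero, unfolded vasilev_zero_word supp_replicate_False] .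
qed

theorem theorem3:
  fixes n :: nat and C :: "bool list set"
  assumes "homogeneous n C"
  shows "homogeneous (2 * n + 1) (vasilev n C)"
proof -
  from assms have code: "perfect_code n C" and zero: "replicate n False \<in> C"
    and hom: "\<forall>y\<in>C. \<exists>\<pi>. \<pi> permutes {..<n} \<and>
        (\<lambda>T. \<pi> ` T) ` STS C y = STS C (replicate n False)"
    unfolding homogeneous_def by auto
  have "\<forall>v\<in>vasilev n C. \<exists>\<pi>. \<pi> permutes {..<2 * n + 1} \<and>
      (\<lambda>T. \<pi> ` T) ` STS (vasilev n C) v = STS (vasilev n C) (replicate (2 * n + 1) False)"
  proof
    fix v assume "v \<in> vasilev n C"
    then obtain x y where xy: "x \<in> words n" "y \<in> C" and v: "v = xorw x y @ [parity x] @ x"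
      unfolding vasilev_def by blast
    obtain p where p: "p permutes {..<n}" "(`) p ` STS C y = STS C (replicate n False)"
      using hom xy(2) by blast
    show "\<exists>\<pi>. \<pi> permutes {..<2 * n + 1} \<and>
        (\<lambda>T. \<pi> ` T) ` STS (vasilev n C) v = STS (vasilev n C) (replicate (2 * n + 1) False)"
      unfolding v using vasilev_perm_permutes[OF p(1)] STS_vasilev_image[OF code zero xy p]
      by (intro exI[of _ "vasilev_perm n p"] conjI)
  qed
  then show ?thesis
    unfolding homogeneous_def using perfect_code_vasilev[OF code] replicate_in_vasilev[OF zero]
    by (intro conjI)
qed

end
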